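(* Let $\Gamma$ be a group and $\Delta$ a finite set of distinct elements generating $\Gamma$. If there exists a homogeneous scalar quantum walk on the Cayley graph $C_\Delta(\Gamma)$, then for every ordered pair $(\delta_1,\delta_2)$ of distinct elements of $\Delta$ there exists an ordered pair $(\delta_3,\delta_4)\neq(\delta_1,\delta_2)$ of elements of $\Delta$ such that $\delta_1\delta_2^{-1}=\delta_3\delta_4^{-1}$.
   Context: The Cayley graph $C_\Delta(\Gamma)$ has vertex set $\Gamma$ and directed edges $(g,g\delta)$ for $g\in\Gamma$, $\delta\in\Delta$. Let $\ell^2(\Gamma)$ have orthonormal basis $\{|g\rangle\}_{g\in\Gamma}$, and for $\delta\in\Gamma$ let $U_\delta$ be the unitary operator on $\ell^2(\Gamma)$ with $U_\delta|g\rangle=|g\delta\rangle$. A homogeneous scalar quantum walk on $C_\Delta(\Gamma)$ is a unitary operator $W=\sum_{\delta\in\Delta}W_\delta U_\delta$ on $\ell^2(\Gamma)$ with complex coefficients $W_\delta$ that are all nonzero (a vanishing coefficient would amount to removing the edges labeled by that generator). *)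

theory Defs
  imports "HOL-Analysis.Analysis"
begin

text \<open>The group \<Gamma> is a type of class group_add (not necessarily commutative),
  written additively: g + d is the product g d, -d the inverse, and
  a - b = a + (-b) is a b^{-1}.\<close>

inductive_set gen_subgroup :: "'a::group_add set \<Rightarrow> 'a set" for D where
  gen_base: "d \<in> D \<Longrightarrow> d \<in> gen_subgroup D"
| gen_zero: "0 \<in> gen_subgroup D"
| gen_add: "a \<in> gen_subgroup D \<Longrightarrow> b \<in> gen_subgroup D \<Longrightarrow> a + b \<in> gen_subgroup D"
| gen_uminus: "a \<in> gen_subgroup D \<Longrightarrow> - a \<in> gen_subgroup D"

definition ell2 :: "('a \<Rightarrow> complex) set" where
  "ell2 = {\<psi>. (\<lambda>g. (cmod (\<psi> g))\<^sup>2) summable_on UNIV}"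

definition ell2_norm :: "('a \<Rightarrow> complex) \<Rightarrow> real" where
  "ell2_norm \<psi> = sqrt (\<Sum>\<^sub>\<infinity>g. (cmod (\<psi> g))\<^sup>2)"

definition unitary_ell2 :: "(('a \<Rightarrow> complex) \<Rightarrow> ('a \<Rightarrow> complex)) \<Rightarrow> bool" where
  "unitary_ell2 T \<longleftrightarrow>
     (\<forall>\<psi>\<in>ell2. T \<psi> \<in> ell2 \<and> ell2_norm (T \<psi>) = ell2_norm \<psi>) \<and>
     (\<forall>\<phi>\<in>ell2. \<exists>\<psi>\<in>ell2. T \<psi> = \<phi>)"

text \<open>The operator W = sum over d in D of W_d U_d, where U_d |g> = |g d>, i.e.
  (U_d psi)(h) = psi(h d^{-1}).\<close>
definition walk_op :: "'a::group_add set \<Rightarrow> ('a \<Rightarrow> complex) \<Rightarrow> ('a \<Rightarrow> complex) \<Rightarrow> ('a \<Rightarrow> complex)" where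
  "walk_op D W \<psi> = (\<lambda>h. \<Sum>d\<in>D. W d * \<psi> (h - d))"

definition homogeneous_scalar_qw :: "'a::group_add set \<Rightarrow> ('a \<Rightarrow> complex) \<Rightarrow> bool" where
  "homogeneous_scalar_qw D W \<longleftrightarrow> (\<forall>d\<in>D. W d \<noteq> 0) \<and> unitary_ell2 (walk_op D W)"

end

theory Submission
  imports Defs
begin

text \<open>A unitary operator preserves inner products, so the images of the orthogonal
  vectors \<open>|0\<rangle>\<close> and \<open>|b\<rangle>\<close> under the walk, namely \<open>\<Sum>\<^sub>\<delta> W\<^sub>\<delta> |\<delta>\<rangle>\<close> and \<open>\<Sum>\<^sub>\<delta> W\<^sub>\<delta> |b\<delta>\<rangle>\<close>,
  are orthogonal. Their inner product is the sum of \<open>W\<^sub>\<delta> conj(W\<^sub>\<delta>\<^sub>')\<close> over all pairs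
  \<open>(\<delta>, \<delta>')\<close> in \<open>\<Delta> \<times> \<Delta>\<close> with \<open>\<delta>\<delta>'\<^sup>-\<^sup>1 = b\<close>. For \<open>b = \<delta>\<^sub>1\<delta>\<^sub>2\<^sup>-\<^sup>1\<close> the pair \<open>(\<delta>\<^sub>1, \<delta>\<^sub>2)\<close>
  contributes a nonzero term, so it cannot be the only such pair.\<close>

definition ket :: "'a \<Rightarrow> 'a \<Rightarrow> complex" where
  "ket a = (\<lambda>h. if h = a then 1 else 0)"

lemma ell2_finite_support:
  assumes "finite F" and zero: "\<And>h. h \<notin> F \<Longrightarrow> \<phi> h = 0"
  shows "\<phi> \<in> ell2" and "(ell2_norm \<phi>)\<^sup>2 = (\<Sum>h\<in>F. (cmod (\<phi> h))\<^sup>2)"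
proof -
  have "(\<lambda>g. (cmod (\<phi> g))\<^sup>2) summable_on UNIV \<longleftrightarrow> (\<lambda>g. (cmod (\<phi> g))\<^sup>2) summable_on F"
    by (rule summable_on_cong_neutral) (auto simp: zero)
  then show "\<phi> \<in> ell2"
    unfolding ell2_def using \<open>finite F\<close> by simp
  have "(\<Sum>\<^sub>\<infinity>g. (cmod (\<phi> g))\<^sup>2) = (\<Sum>\<^sub>\<infinity>g\<in>F. (cmod (\<phi> g))\<^sup>2)"
    by (rule infsum_cong_neutral) (auto simp: zero)
  moreover have "0 \<le> (\<Sum>h\<in>F. (cmod (\<phi> h))\<^sup>2)"
    by (rule sum_nonneg) simp
  ultimately show "(ell2_norm \<phi>)\<^sup>2 = (\<Sum>h\<in>F. (cmod (\<phi> h))\<^sup>2)"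
    unfolding ell2_norm_def using \<open>finite F\<close> by simp
qed

lemma complex_polarization:
  fixes u v :: complex
  shows "4 * (u * cnj v) = (\<Sum>k<4. \<i> ^ k * ((u + \<i> ^ k * v) * cnj (u + \<i> ^ k * v)))"
  by (simp add: numeral_eq_Suc algebra_simps)

lemma sum_polarization:
  fixes x y :: "'a \<Rightarrow> complex"
  shows "4 * (\<Sum>h\<in>F. x h * cnj (y h)) =
    (\<Sum>k<4. \<i> ^ k * complex_of_real (\<Sum>h\<in>F. (cmod (x h + \<i> ^ k * y h))\<^sup>2))"
proof -
  have "4 * (\<Sum>h\<in>F. x h * cnj (y h)) =
      (\<Sum>h\<in>F. \<Sum>k<4. \<i> ^ k * ((x h + \<i> ^ k * y h) * cnj (x h + \<i> ^ k * y h)))"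
    by (simp add: sum_distrib_left complex_polarization)
  also have "\<dots> = (\<Sum>k<4. \<i> ^ k * (\<Sum>h\<in>F. (x h + \<i> ^ k * y h) * cnj (x h + \<i> ^ k * y h)))"
    by (subst sum.swap) (simp add: sum_distrib_left)
  finally show ?thesis
    by (simp add: complex_norm_square del: of_real_power)
qed

lemma unitary_ell2_preserves_inner:
  assumes "unitary_ell2 T"
    and linear: "\<And>c. T (\<lambda>h. x h + c * y h) = (\<lambda>h. T x h + c * T y h)"
    and "finite F"
    and support: "\<And>h. h \<notin> F \<Longrightarrow> x h = 0 \<and> y h = 0 \<and> T x h = 0 \<and> T y h = 0"
  shows "(\<Sum>h\<in>F. T x h * cnj (T y h)) = (\<Sum>h\<in>F. x h * cnj (y h))"
proof -
  have "(\<Sum>h\<in>F. (cmod (T x h + c * T y h))\<^sup>2) = (\<Sum>h\<in>F. (cmod (x h + c * y h))\<^sup>2)"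
    for c
  proof -
    define v where "v = (\<lambda>h. x h + c * y h)"
    have Tv_eq: "T v = (\<lambda>h. T x h + c * T y h)"
      unfolding v_def by (rule linear)
    have v: "v h = 0" if "h \<notin> F" for h
      using support[OF that] by (simp add: v_def)
    have Tv: "T v h = 0" if "h \<notin> F" for h
      using support[OF that] by (simp add: Tv_eq)
    have norm_Tv: "ell2_norm (T v) = ell2_norm v"
      using \<open>unitary_ell2 T\<close> ell2_finite_support(1)[of F v, OF \<open>finite F\<close> v]
      unfolding unitary_ell2_def by blast
    have "(\<Sum>h\<in>F. (cmod (T x h + c * T y h))\<^sup>2) = (ell2_norm (T v))\<^sup>2"
      using ell2_finite_support(2)[of F "T v", OF \<open>finite F\<close> Tv] by (simp add: Tv_eq)
    also have "\<dots> = (ell2_norm v)\<^sup>2"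
      by (simp only: norm_Tv)
    also have "\<dots> = (\<Sum>h\<in>F. (cmod (x h + c * y h))\<^sup>2)"
      using ell2_finite_support(2)[of F v, OF \<open>finite F\<close> v] by (simp add: v_def)
    finally show ?thesis .
  qed
  then have "4 * (\<Sum>h\<in>F. T x h * cnj (T y h)) = 4 * (\<Sum>h\<in>F. x h * cnj (y h))"
    by (simp only: sum_polarization)
  then show ?thesis
    by simp
qed

lemma walk_op_linear:
  "walk_op D W (\<lambda>h. x h + c * y h) = (\<lambda>h. walk_op D W x h + c * walk_op D W y h)"
  by (simp add: walk_op_def ring_distribs sum.distrib sum_distrib_left mult.left_commute)

lemma walk_op_ket:
  assumes "finite D"
  shows "walk_op D W (ket a) h = (if - a + h \<in> D then W (- a + h) else 0)"
proof -
  have "h - d = a \<longleftrightarrow> d = - a + h" for d :: 'a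
    by (metis eq_diff_eq minus_add_cancel)
  then have "walk_op D W (ket a) h = (\<Sum>d\<in>D. if d = - a + h then W d else 0)"
    unfolding walk_op_def ket_def by (intro sum.cong) auto
  then show ?thesis
    using \<open>finite D\<close> by simp
qed

lemma unitary_walk_op_coefficients_orthogonal:
  assumes "finite D" and "unitary_ell2 (walk_op D W)" and "b \<noteq> 0"
  shows "(\<Sum>(d, d')\<in>{(d, d') \<in> D \<times> D. d - d' = b}. W d * cnj (W d')) = 0"
proof -
  have pair_iff: "d - d' = b \<longleftrightarrow> d' = - b + d" for d d' :: 'a
    by (metis add_diff_cancel diff_add_cancel minus_add_cancel)
  define F where "F = D \<union> (\<lambda>d. b + d) ` D \<union> {0, b}"
  have "finite F"
    using \<open>finite D\<close> by (simp add: F_def)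
  have support:
    "ket 0 h = 0 \<and> ket b h = 0 \<and> walk_op D W (ket 0) h = 0 \<and> walk_op D W (ket b) h = 0"
    if "h \<notin> F" for h
  proof -
    have "- b + h \<notin> D"
      using that by (auto simp: F_def image_iff)
    then show ?thesis
      using that \<open>finite D\<close> by (simp add: F_def walk_op_ket) (simp add: ket_def)
  qed
  have "(\<Sum>(d, d')\<in>{(d, d') \<in> D \<times> D. d - d' = b}. W d * cnj (W d')) =
      (\<Sum>h\<in>{h \<in> D. - b + h \<in> D}. W h * cnj (W (- b + h)))"
    by (rule sum.reindex_bij_witness[of _ "\<lambda>h. (h, - b + h)" fst]) (auto simp: pair_iff)
  also have "\<dots> = (\<Sum>h\<in>F. walk_op D W (ket 0) h * cnj (walk_op D W (ket b) h))"
    using \<open>finite D\<close> \<open>finite F\<close>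
    by (intro sum.mono_neutral_cong_left) (auto simp: walk_op_ket F_def)
  also have "\<dots> = (\<Sum>h\<in>F. ket 0 h * cnj (ket b h))"
    by (rule unitary_ell2_preserves_inner[OF assms(2) walk_op_linear \<open>finite F\<close> support])
  also have "\<dots> = 0"
    using \<open>b \<noteq> 0\<close> by (intro sum.neutral) (simp add: ket_def)
  finally show ?thesis .
qed

theorem proposition2:
  fixes \<Delta> :: "'a::group_add set"
  assumes "finite \<Delta>"
    and "gen_subgroup \<Delta> = UNIV"
    and "\<exists>W. homogeneous_scalar_qw \<Delta> W"
  shows "\<forall>d1\<in>\<Delta>. \<forall>d2\<in>\<Delta>. d1 \<noteq> d2 \<longrightarrow>
           (\<exists>d3\<in>\<Delta>. \<exists>d4\<in>\<Delta>. (d3, d4) \<noteq> (d1, d2) \<and> d1 - d2 = d3 - d4)"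
proof (intro ballI impI)
  fix d1 d2
  assume "d1 \<in> \<Delta>" "d2 \<in> \<Delta>" "d1 \<noteq> d2"
  obtain W where W: "\<forall>d\<in>\<Delta>. W d \<noteq> 0" "unitary_ell2 (walk_op \<Delta> W)"
    using assms(3) unfolding homogeneous_scalar_qw_def by blast
  show "\<exists>d3\<in>\<Delta>. \<exists>d4\<in>\<Delta>. (d3, d4) \<noteq> (d1, d2) \<and> d1 - d2 = d3 - d4"
  proof (rule ccontr)
    assume "\<not> ?thesis"
    then have "{(d, d') \<in> \<Delta> \<times> \<Delta>. d - d' = d1 - d2} = {(d1, d2)}"
      using \<open>d1 \<in> \<Delta>\<close> \<open>d2 \<in> \<Delta>\<close> by (auto; metis)
    moreover have "d1 - d2 \<noteq> 0"
      using \<open>d1 \<noteq> d2\<close> by simp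
    ultimately have "W d1 * cnj (W d2) = 0"
      using unitary_walk_op_coefficients_orthogonal[OF assms(1) W(2)] by fastforce
    then show False
      using W(1) \<open>d1 \<in> \<Delta>\<close> \<open>d2 \<in> \<Delta>\<close> by simp
  qed
qed

end
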